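(* Let $q$ be a power of $2$, $s\ge2$, and $n\ge s$ integers with $d_{\max\text{-}iso}(q;[n,s])\ge1$; let $\pi:\mathbb{F}_{q^s}\to\mathbb{F}_q^n$ be an isometry whose image $\pi(\mathbb{F}_{q^s})$ is an $[n,s,d]_q$ code with $d=d_{\max\text{-}iso}(q;[n,s])$. Let $a,b\in\mathbb{F}_{q^s}$ with $b\neq0$ and let $N\ge2$. Let $r\ge0$ be such that $2^r$ divides $N+1$ but $2^{r+1}$ does not, let $N+1=2^r(m+1)$, and let $\theta\in\overline{\mathbb{F}}_q$ be a primitive $(m+1)$-th root of unity. Assume: if $r=0$, then $a/b\notin\{1/b+\theta^i+\theta^{-i}:1\le i\le m/2\}$; if $r\ge1$ and $m=0$, then $a\ne1$; if $r\ge1$ and $m\ge1$, then $a/b\notin\{1/b\}\cup\{1/b+\theta^i+\theta^{-i}:1\le i\le m/2\}$. Then $\pi^{\otimes 2N}(\hat C_N(a,b))$ is an LCD code over $\mathbb{F}_q$ with parameters $[2nN,sN,D^*]_q$, where $D^*\ge dD$ and $D$ is the minimum distance of $\hat C_N(a,b)$.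
   Context: For a field $K$, $a,b\in K$ and $N\ge 2$, $\hat T_N(a,b)$ is the $N\times N$ symmetric tridiagonal Toeplitz matrix with diagonal entries $a$, first super- and sub-diagonal entries $b$, other entries $0$; $\hat C_N(a,b)$ is the $[2N,N]$ linear code over $K$ (here $K=\mathbb{F}_{q^s}$) with generator matrix $[I_N\mid\hat T_N(a,b)]$. A linear code $C$ is LCD if $C\cap C^\perp=\{0\}$ (Euclidean dual). An $\mathbb{F}_q$-linear map $\pi:\mathbb{F}_{q^s}\to\mathbb{F}_q^n$ ($n\ge s\ge2$) is an isometry if there is an $\mathbb{F}_q$-basis $(e_1,\dots,e_s)$ of $\mathbb{F}_{q^s}$ with trace-dual basis $(e'_1,\dots,e'_s)$ such that $\pi(e_i)\cdot\pi(e'_j)=\delta_{ij}$ for all $i,j$ (standard inner product on $\mathbb{F}_q^n$). $d_{\max\text{-}iso}(q;[n,s])$ is the largest $d$ such that some isometry $\pi:\mathbb{F}_{q^s}\to\mathbb{F}_q^n$ has image $\pi(\mathbb{F}_{q^s})$ (an $[n,s]_q$ code) of minimum distance $d$. The map $\pi^{\otimes 2N}:\mathbb{F}_{q^s}^{2N}\to\mathbb{F}_q^{2Nn}$ is $(c_1,\dots,c_{2N})\mapsto(\pi(c_1),\dots,\pi(c_{2N}))$. *)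

theory Defs
  imports "HOL-Algebra.Algebraic_Closure_Type"
begin

text \<open>The field F_{q^s} is a finite field type 'K with CARD('K) = q^s.
  The prime subfield F_q is realised as the subfield {x. x^q = x} of 'K.
  Vectors of length n are functions nat => 'K vanishing at indices >= n.\<close>

definition Fsub :: "nat \<Rightarrow> 'K::field set" where
  "Fsub q = {x. x ^ q = x}"

definition vecs :: "'K::field set \<Rightarrow> nat \<Rightarrow> (nat \<Rightarrow> 'K) set" where
  "vecs F n = {v. (\<forall>i<n. v i \<in> F) \<and> (\<forall>i\<ge>n. v i = 0)}"

definition smult_vec :: "'K::field \<Rightarrow> (nat \<Rightarrow> 'K) \<Rightarrow> (nat \<Rightarrow> 'K)" where
  "smult_vec c v = (\<lambda>j. c * v j)"

definition dotp :: "nat \<Rightarrow> (nat \<Rightarrow> 'K::field) \<Rightarrow> (nat \<Rightarrow> 'K) \<Rightarrow> 'K" where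
  "dotp n u v = (\<Sum>i<n. u i * v i)"

definition hamming :: "nat \<Rightarrow> (nat \<Rightarrow> 'K::field) \<Rightarrow> (nat \<Rightarrow> 'K) \<Rightarrow> nat" where
  "hamming n x y = card {i. i < n \<and> x i \<noteq> y i}"

text \<open>Minimum distance of a code (with at least two codewords).\<close>
definition min_dist :: "nat \<Rightarrow> (nat \<Rightarrow> 'K::field) set \<Rightarrow> nat" where
  "min_dist n C = Min {hamming n x y | x y. x \<in> C \<and> y \<in> C \<and> x \<noteq> y}"

definition lin_code :: "'K::field set \<Rightarrow> nat \<Rightarrow> (nat \<Rightarrow> 'K) set \<Rightarrow> bool" where
  "lin_code F n C \<longleftrightarrow> C \<subseteq> vecs F n \<and> (\<lambda>_. 0) \<in> C \<and>
     (\<forall>x\<in>C. \<forall>y\<in>C. (\<lambda>j. x j + y j) \<in> C) \<and> (\<forall>c\<in>F. \<forall>x\<in>C. smult_vec c x \<in> C)"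

definition lin_indep_vecs :: "'K::field set \<Rightarrow> nat \<Rightarrow> (nat \<Rightarrow> nat \<Rightarrow> 'K) \<Rightarrow> bool" where
  "lin_indep_vecs F k v \<longleftrightarrow> (\<forall>c. (\<forall>i<k. c i \<in> F) \<longrightarrow>
      (\<lambda>j. \<Sum>i<k. c i * v i j) = (\<lambda>_. 0) \<longrightarrow> (\<forall>i<k. c i = 0))"

definition code_dim :: "'K::field set \<Rightarrow> (nat \<Rightarrow> 'K) set \<Rightarrow> nat \<Rightarrow> bool" where
  "code_dim F C k \<longleftrightarrow> (\<exists>v. (\<forall>i<k. v i \<in> C) \<and> lin_indep_vecs F k v \<and>
      C = {(\<lambda>j. \<Sum>i<k. c i * v i j) | c. \<forall>i<k. c i \<in> F})"

definition dual_code :: "'K::field set \<Rightarrow> nat \<Rightarrow> (nat \<Rightarrow> 'K) set \<Rightarrow> (nat \<Rightarrow> 'K) set" where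
  "dual_code F n C = {v \<in> vecs F n. \<forall>c\<in>C. dotp n v c = 0}"

definition is_LCD :: "'K::field set \<Rightarrow> nat \<Rightarrow> (nat \<Rightarrow> 'K) set \<Rightarrow> bool" where
  "is_LCD F n C \<longleftrightarrow> C \<inter> dual_code F n C = {(\<lambda>_. 0)}"

definition trace :: "nat \<Rightarrow> nat \<Rightarrow> 'K::field \<Rightarrow> 'K" where
  "trace q s x = (\<Sum>i<s. x ^ (q ^ i))"

definition is_basis_over :: "'K::field set \<Rightarrow> nat \<Rightarrow> (nat \<Rightarrow> 'K) \<Rightarrow> bool" where
  "is_basis_over F s e \<longleftrightarrow>
     (\<forall>c. (\<forall>i<s. c i \<in> F) \<longrightarrow> (\<Sum>i<s. c i * e i) = 0 \<longrightarrow> (\<forall>i<s. c i = 0)) \<and>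
     (\<forall>x. \<exists>c. (\<forall>i<s. c i \<in> F) \<and> x = (\<Sum>i<s. c i * e i))"

definition Fq_linear_map :: "nat \<Rightarrow> nat \<Rightarrow> ('K::field \<Rightarrow> nat \<Rightarrow> 'K) \<Rightarrow> bool" where
  "Fq_linear_map q n \<pi> \<longleftrightarrow> range \<pi> \<subseteq> vecs (Fsub q) n \<and>
     (\<forall>x y. \<pi> (x + y) = (\<lambda>j. \<pi> x j + \<pi> y j)) \<and>
     (\<forall>c\<in>Fsub q. \<forall>x. \<pi> (c * x) = smult_vec c (\<pi> x))"

definition is_isometry :: "nat \<Rightarrow> nat \<Rightarrow> nat \<Rightarrow> ('K::field \<Rightarrow> nat \<Rightarrow> 'K) \<Rightarrow> bool" where
  "is_isometry q s n \<pi> \<longleftrightarrow> Fq_linear_map q n \<pi> \<and>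
     (\<exists>e e'. is_basis_over (Fsub q) s e \<and> is_basis_over (Fsub q) s e' \<and>
        (\<forall>i<s. \<forall>j<s. trace q s (e i * e' j) = (if i = j then 1 else 0)) \<and>
        (\<forall>i<s. \<forall>j<s. dotp n (\<pi> (e i)) (\<pi> (e' j)) = (if i = j then 1 else 0)))"

definition d_max_iso :: "nat \<Rightarrow> nat \<Rightarrow> nat \<Rightarrow> 'K::field itself \<Rightarrow> nat" where
  "d_max_iso q s n (_::'K itself) =
     Sup {min_dist n (range \<pi>) | \<pi> :: 'K \<Rightarrow> nat \<Rightarrow> 'K. is_isometry q s n \<pi>}"

text \<open>Symmetric tridiagonal Toeplitz matrix T_N(a,b) (indices 0..N-1).\<close>
definition Tmat :: "nat \<Rightarrow> 'K::field \<Rightarrow> 'K \<Rightarrow> nat \<Rightarrow> nat \<Rightarrow> 'K" where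
  "Tmat N a b i j = (if i < N \<and> j < N then
      (if i = j then a else if i = j + 1 \<or> j = i + 1 then b else 0) else 0)"

text \<open>Generator matrix [I_N | T_N(a,b)], N rows and 2N columns.\<close>
definition genmat :: "nat \<Rightarrow> 'K::field \<Rightarrow> 'K \<Rightarrow> nat \<Rightarrow> nat \<Rightarrow> 'K" where
  "genmat N a b i j = (if i < N \<and> j < N then (if i = j then 1 else 0)
      else if i < N \<and> N \<le> j \<and> j < 2 * N then Tmat N a b i (j - N) else 0)"

definition Chat :: "nat \<Rightarrow> 'K::field \<Rightarrow> 'K \<Rightarrow> (nat \<Rightarrow> 'K) set" where
  "Chat N a b = {(\<lambda>j. \<Sum>i<N. u i * genmat N a b i j) | u. True}"

text \<open>pi^{(x)2N}: (c_1..c_2N) maps to (pi c_1, ..., pi c_2N).\<close>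
definition pi_ext :: "nat \<Rightarrow> nat \<Rightarrow> ('K::field \<Rightarrow> nat \<Rightarrow> 'K) \<Rightarrow> (nat \<Rightarrow> 'K) \<Rightarrow> (nat \<Rightarrow> 'K)" where
  "pi_ext n N \<pi> c = (\<lambda>k. if k < 2 * N * n then \<pi> (c (k div n)) (k mod n) else 0)"

end

theory Submission
  imports Defs "HOL-Number_Theory.Residues" "HOL-Computational_Algebra.Polynomial"
begin

text \<open>
  The field \<open>\<bbbF>\<^bsub>q^s\<^esub>\<close> has characteristic 2. The code \<open>\<^bold>C\<close> with generator matrix
  \<open>G = [I | T]\<close>, \<open>T = T\<^sub>N(a,b)\<close>, is LCD iff \<open>G G\<^sup>T = I + T\<^sup>2 = (T + I)\<^sup>2\<close> is nonsingular,
  i.e. iff \<open>T\<^sub>N(a+1,b)\<close> is. A kernel vector of \<open>T\<^sub>N(a+1,b)\<close> is determined by its first entry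
  through the continuant recurrence, so \<open>T\<^sub>N(a+1,b)\<close> is nonsingular iff the continuant of length
  \<open>N\<close> at \<open>(a+1)/b\<close> is nonzero. Writing the argument as \<open>z + z\<^sup>-\<^sup>1\<close>, the roots of this continuant
  are the \<open>\<theta>\<^sup>j + \<theta>\<^sup>-\<^sup>j\<close> (and \<open>0\<close> when \<open>N\<close> is odd), which the hypotheses exclude.

  The isometry turns the standard form on \<open>\<bbbF>\<^sub>q\<close>-blocks into the trace of the standard form,
  \<open>\<pi>(c)\<cdot>\<pi>(c') = Tr(c\<cdot>c')\<close>. Since \<open>\<^bold>C\<close> is \<open>\<bbbF>\<^bsub>q^s\<^esub>\<close>-linear and the trace form is
  nondegenerate, a word of \<open>\<pi>(\<^bold>C)\<close> orthogonal to \<open>\<pi>(\<^bold>C)\<close> comes from a word of \<open>\<^bold>C\<close>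
  orthogonal to \<open>\<^bold>C\<close>, so LCD is inherited. A nonzero symbol of a codeword is mapped to a block
  of weight at least \<open>d\<close>, which gives \<open>D\<^sup>* \<ge> d D\<close>, and an \<open>\<bbbF>\<^sub>q\<close>-basis of \<open>\<bbbF>\<^bsub>q^s\<^esub>\<close> times
  an \<open>\<bbbF>\<^bsub>q^s\<^esub>\<close>-basis of \<open>\<^bold>C\<close> gives an \<open>\<bbbF>\<^sub>q\<close>-basis of \<open>\<pi>(\<^bold>C)\<close>.
\<close>

section \<open>Characteristic two and continuants\<close>

lemma CHAR_eq_2_if_card_power_2:
  assumes "card (UNIV :: 'K::{field,finite} set) = 2 ^ k"
  shows "CHAR('K) = 2"
proof -
  have "prime CHAR('K)"
    by (simp add: finite_imp_CHAR_pos prime_CHAR_semidom)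
  moreover have "CHAR('K) dvd 2 ^ k"
    using CHAR_dvd_CARD[where ?'a = 'K] assms by simp
  ultimately show ?thesis
    by (metis prime_dvd_power primes_dvd_imp_eq two_is_prime_nat)
qed

lemma two_eq_0_CHAR_2: "CHAR('a::comm_ring_1) = 2 \<Longrightarrow> (2::'a) = 0"
  by (metis of_nat_CHAR of_nat_numeral)

lemma add_self_CHAR_2: "CHAR('a::comm_ring_1) = 2 \<Longrightarrow> x + x = (0::'a)"
  by (metis mult_2 mult_zero_left two_eq_0_CHAR_2)

lemma add_eq_0_iff_CHAR_2: "CHAR('a::comm_ring_1) = 2 \<Longrightarrow> x + y = (0::'a) \<longleftrightarrow> x = y"
  by (metis add_eq_0_iff uminus_CHAR_2)

lemma power_2_power_eq_1_CHAR_2: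
  fixes y :: "'a::idom"
  assumes char: "CHAR('a) = 2" and y: "y ^ (2 ^ k) = 1"
  shows "y = 1"
proof -
  have "(y + 1) ^ (2 ^ k) = y ^ (2 ^ k) + 1"
    using freshmans_dream'[of "2 ^ k" k y 1] char by simp
  also have "\<dots> = 0"
    using y two_eq_0_CHAR_2[OF char] by simp
  finally have "y + 1 = 0" by simp
  then show ?thesis
    using add_eq_0_iff_CHAR_2[OF char] by simp
qed

text \<open>The continuant of the constant sequence \<open>x\<close>; in characteristic 2 it is \<open>det T\<^sub>k(x,1)\<close>.\<close>

fun continuant :: "'a::comm_ring_1 \<Rightarrow> nat \<Rightarrow> 'a" where
  "continuant x 0 = 1"
| "continuant x (Suc 0) = x"
| "continuant x (Suc (Suc k)) = x * continuant x (Suc k) + continuant x k"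

lemma to_ac_continuant: "to_ac (continuant x k) = continuant (to_ac x) k"
  by (induction x k rule: continuant.induct) simp_all

lemma continuant_0_even: "continuant 0 (2 * j) = 1"
  by (induction j) (simp_all add: numeral_2_eq_2)

lemma continuant_add_inverse_CHAR_2:
  fixes z w :: "'a::comm_ring_1"
  assumes char: "CHAR('a) = 2" and zw: "z * w = 1"
  shows "continuant (z + w) k * (z + w) = z ^ (k + 1) + w ^ (k + 1)"
proof -
  have "continuant (z + w) k * (z + w) = z ^ (k + 1) + w ^ (k + 1) \<and>
        continuant (z + w) (Suc k) * (z + w) = z ^ (k + 2) + w ^ (k + 2)"
  proof (induction k)
    case 0
    have "(z + w) * (z + w) = z ^ 2 + w ^ 2 + 2 * (z * w)"
      by (simp add: algebra_simps power2_eq_square)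
    then show ?case
      using two_eq_0_CHAR_2[OF char] by (simp add: power2_eq_square)
  next
    case (Suc k)
    have "continuant (z + w) (Suc (Suc k)) * (z + w)
        = (z + w) * (z ^ (k + 2) + w ^ (k + 2)) + (z ^ (k + 1) + w ^ (k + 1))"
      using Suc by (simp add: algebra_simps)
    also have "\<dots> = z ^ (k + 3) + w ^ (k + 3) + (z * w + 1) * (z ^ (k + 1) + w ^ (k + 1))"
      by (simp add: algebra_simps numeral_3_eq_3 numeral_2_eq_2)
    also have "\<dots> = z ^ (k + 3) + w ^ (k + 3)"
      using zw add_self_CHAR_2[OF char, of 1] by simp
    finally show ?case
      using Suc by (simp add: numeral_3_eq_3 numeral_2_eq_2)
  qed
  then show ?thesis by simp
qed

lemma (in alg_closed_field) eq_add_inverse: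
  "\<exists>z. z \<noteq> 0 \<and> x = z + inverse z"
proof -
  define f where "f = (\<lambda>k::nat. if k = 1 then - x else 1)"
  obtain z where "(\<Sum>k\<le>2. f k * z ^ k) = 0"
    using alg_closed[of 2 f] by (auto simp: f_def)
  then have z: "1 - x * z + z ^ 2 = 0"
    by (simp add: numeral_2_eq_2 f_def)
  have "z \<noteq> 0"
  proof
    assume "z = 0"
    with z show False by simp
  qed
  moreover have "x = z + inverse z"
    using z \<open>z \<noteq> 0\<close> by (simp add: field_simps power2_eq_square)
  ultimately show ?thesis by blast
qed

lemma root_of_unity_eq_power:
  fixes \<theta> z :: "'a::field"
  assumes prim: "\<theta> ^ (m + 1) = 1" "\<forall>k. 0 < k \<and> k < m + 1 \<longrightarrow> \<theta> ^ k \<noteq> 1"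
    and z: "z ^ (m + 1) = 1"
  shows "\<exists>j\<le>m. z = \<theta> ^ j"
proof -
  define R where "R = {u::'a. u ^ (m + 1) = 1}"
  have R_poly: "R = {u. poly (monom 1 (m + 1) - 1) u = 0}"
    by (simp add: R_def poly_monom)
  have nonzero: "monom (1::'a) (m + 1) - 1 \<noteq> 0"
  proof
    assume "monom (1::'a) (m + 1) - 1 = 0"
    then have "coeff (monom (1::'a) (m + 1) - 1) (m + 1) = 0" by simp
    then show False by simp
  qed
  have deg: "degree (monom (1::'a) (m + 1) - 1) \<le> m + 1"
    by (intro degree_diff_le) (auto simp: degree_monom_le)
  have "finite R" "card R \<le> m + 1"
    using poly_roots_finite[OF nonzero] card_poly_roots_bound[OF nonzero] deg R_poly by auto
  have "inj_on (\<lambda>j. \<theta> ^ j) {..m}"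
  proof (rule linorder_inj_onI)
    fix i j assume "i < j" "j \<in> {..m}"
    then have "\<theta> ^ (j - i) \<noteq> 1" using prim(2) by auto
    moreover have "\<theta> ^ j = \<theta> ^ i * \<theta> ^ (j - i)"
      using \<open>i < j\<close> by (simp flip: power_add)
    moreover have "\<theta> ^ i \<noteq> 0"
      using prim(1) by (metis power_0_left power_eq_0_iff zero_neq_one add_eq_0_iff_both_eq_0)
    ultimately show "\<theta> ^ i \<noteq> \<theta> ^ j"
      by simp
  qed auto
  then have "card ((\<lambda>j. \<theta> ^ j) ` {..m}) = m + 1"
    by (simp add: card_image)
  moreover have "(\<theta> ^ j) ^ (m + 1) = 1" for j
    using prim(1) by (metis mult.commute power_mult power_one)
  then have "(\<lambda>j. \<theta> ^ j) ` {..m} \<subseteq> R"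
    by (auto simp: R_def)
  ultimately have "(\<lambda>j. \<theta> ^ j) ` {..m} = R"
    using \<open>finite R\<close> \<open>card R \<le> m + 1\<close> by (simp add: card_seteq)
  then show ?thesis
    using z by (auto simp: R_def)
qed

lemma continuant_eq_0_imp_power_add_inverse:
  fixes x \<theta> :: "'a::alg_closed_field"
  assumes char: "CHAR('a) = 2"
    and prim: "\<theta> ^ (m + 1) = 1" "\<forall>k. 0 < k \<and> k < m + 1 \<longrightarrow> \<theta> ^ k \<noteq> 1"
    and odd: "odd (m + 1)" and N: "N + 1 = 2 ^ r * (m + 1)"
    and x: "x \<noteq> 0" "continuant x N = 0"
  shows "\<exists>j. 1 \<le> j \<and> 2 * j \<le> m \<and> x = \<theta> ^ j + inverse (\<theta> ^ j)"
proof -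
  obtain z where z: "z \<noteq> 0" "x = z + inverse z"
    using eq_add_inverse by blast
  have "z ^ (N + 1) + inverse z ^ (N + 1) = 0"
    using continuant_add_inverse_CHAR_2[OF char, of z "inverse z" N] z x by simp
  then have "z ^ (N + 1) * z ^ (N + 1) = 1"
    using z(1) add_eq_0_iff_CHAR_2[OF char] by (simp add: field_simps)
  then have "z ^ (2 * (N + 1)) = 1"
    by (simp only: mult_2 power_add)
  moreover have "2 * (N + 1) = (m + 1) * 2 ^ (r + 1)"
    using N by simp
  ultimately have "(z ^ (m + 1)) ^ (2 ^ (r + 1)) = 1"
    by (simp only: power_mult)
  then have "z ^ (m + 1) = 1"
    by (rule power_2_power_eq_1_CHAR_2[OF char])
  then obtain j where j: "j \<le> m" "z = \<theta> ^ j"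
    using root_of_unity_eq_power[OF prim] by blast
  have "j \<noteq> 0"
  proof
    assume "j = 0"
    then have "x = 2" using j z by simp
    then show False using x(1) two_eq_0_CHAR_2[OF char] by simp
  qed
  show ?thesis
  proof (cases "2 * j \<le> m")
    case True
    then show ?thesis using j z \<open>j \<noteq> 0\<close> by (intro exI[of _ j]) auto
  next
    case False
    \<comment> \<open>replace \<open>\<theta>\<^sup>j\<close> by its inverse \<open>\<theta>\<^bsup>m+1-j\<^esup>\<close>; \<open>2 j = m + 1\<close> is excluded by parity\<close>
    define j' where "j' = m + 1 - j"
    have "2 * j \<noteq> m + 1" using odd by (metis dvd_triv_left)
    then have "1 \<le> j'" "2 * j' \<le> m" using False j by (auto simp: j'_def)
    moreover have "\<theta> ^ j * \<theta> ^ j' = 1"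
      using prim(1) j by (simp add: j'_def flip: power_add)
    then have "\<theta> ^ j' = inverse (\<theta> ^ j)"
      by (rule inverse_unique[symmetric])
    ultimately show ?thesis
      using j z by (intro exI[of _ j']) (auto simp: add.commute)
  qed
qed

lemma continuant_plus_one_div_nonzero:
  fixes a b :: "'K::field" and \<theta> :: "'K alg_closure"
  assumes char: "CHAR('K) = 2" and b: "b \<noteq> 0"
    and r_exact: "\<not> 2 ^ (r + 1) dvd N + 1"
    and m_def: "N + 1 = 2 ^ r * (m + 1)"
    and theta_prim: "\<theta> ^ (m + 1) = 1" "\<forall>k. 0 < k \<and> k < m + 1 \<longrightarrow> \<theta> ^ k \<noteq> 1"
    and cond0: "r = 0 \<Longrightarrow> to_ac (a / b) \<notin>
        {to_ac (1 / b) + \<theta> ^ i + inverse (\<theta> ^ i) | i. 1 \<le> i \<and> 2 * i \<le> m}"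
    and cond1: "r \<ge> 1 \<Longrightarrow> m = 0 \<Longrightarrow> a \<noteq> 1"
    and cond2: "r \<ge> 1 \<Longrightarrow> m \<ge> 1 \<Longrightarrow> to_ac (a / b) \<notin>
        {to_ac (1 / b)} \<union> {to_ac (1 / b) + \<theta> ^ i + inverse (\<theta> ^ i) | i. 1 \<le> i \<and> 2 * i \<le> m}"
  shows "continuant ((a + 1) / b) N \<noteq> 0"
proof
  assume zero: "continuant ((a + 1) / b) N = 0"
  define x where "x = (a + 1) / b"
  have "odd (m + 1)"
  proof
    assume "even (m + 1)"
    then obtain l where "m + 1 = 2 * l" ..
    then have "N + 1 = 2 ^ (r + 1) * l"
      using m_def by simp
    then show False
      using r_exact by simp
  qed
  have ab: "a / b = x + 1 / b"
    using uminus_CHAR_2[OF char, of "1 / b"] by (simp add: x_def add_divide_distrib)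
  show False
  proof (cases "x = 0")
    case True
    then have "a = 1"
      using b add_eq_0_iff_CHAR_2[OF char] by (simp add: x_def)
    moreover have "r \<noteq> 0"
    proof
      \<comment> \<open>for \<open>r = 0\<close> the length \<open>N\<close> is even and \<open>continuant 0 N = 1\<close>\<close>
      assume "r = 0"
      then obtain j where "N = 2 * j"
        using m_def \<open>odd (m + 1)\<close> by (metis evenE odd_add odd_one power_0 mult_1)
      then show False
        using zero \<open>x = 0\<close> continuant_0_even[of j, where 'a = 'K] by (simp flip: x_def)
    qed
    ultimately show False
      using cond1 cond2 by force
  next
    case False
    have "continuant (to_ac x) N = 0"
      using zero by (metis to_ac_continuant to_ac_0 x_def)
    moreover have "CHAR('K alg_closure) = 2" "to_ac x \<noteq> 0"
      using char False by simp_all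
    ultimately obtain j where j: "1 \<le> j" "2 * j \<le> m" "to_ac x = \<theta> ^ j + inverse (\<theta> ^ j)"
      using continuant_eq_0_imp_power_add_inverse[OF _ theta_prim \<open>odd (m + 1)\<close> m_def]
      by blast
    then have "to_ac (a / b) = to_ac (1 / b) + \<theta> ^ j + inverse (\<theta> ^ j)"
      by (simp add: ab add_ac del: to_ac_divide)
    then show False
      using cond0 cond2 j by (cases "r = 0") auto
  qed
qed

section \<open>The code \<open>\<^bold>C\<close> generated by \<open>[I | T\<^sub>N(a,b)]\<close>\<close>

lemma sum_lessThan_add:
  fixes m n :: nat
  shows "(\<Sum>i<m + n. f i) = (\<Sum>i<m. f i) + (\<Sum>i<n. f (m + i))"
  by (induction n) (simp_all add: ac_simps)

lemma sum_lessThan_mult_blocks: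
  fixes M n :: nat
  shows "(\<Sum>k<M * n. f k) = (\<Sum>j<M. \<Sum>l<n. f (j * n + l))"
  by (induction M) (simp_all add: add.commute[of n] sum_lessThan_add)

definition Chat_enc :: "nat \<Rightarrow> 'K::field \<Rightarrow> 'K \<Rightarrow> (nat \<Rightarrow> 'K) \<Rightarrow> nat \<Rightarrow> 'K" where
  "Chat_enc N a b u = (\<lambda>j. \<Sum>i<N. u i * genmat N a b i j)"

definition tridiag_apply :: "nat \<Rightarrow> 'K::field \<Rightarrow> 'K \<Rightarrow> (nat \<Rightarrow> 'K) \<Rightarrow> nat \<Rightarrow> 'K" where
  "tridiag_apply N a b u k = (\<Sum>i<N. Tmat N a b k i * u i)"

lemma Chat_eq_range_Chat_enc: "Chat N a b = range (Chat_enc N a b)"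
  unfolding Chat_def Chat_enc_def by auto

lemma Tmat_commute: "Tmat N a b i j = Tmat N a b j i"
  unfolding Tmat_def by auto

lemma Chat_enc_less:
  assumes "j < N"
  shows "Chat_enc N a b u j = u j"
proof -
  have "Chat_enc N a b u j = (\<Sum>i<N. if i = j then u i else 0)"
    unfolding Chat_enc_def by (rule sum.cong) (auto simp: genmat_def assms)
  then show ?thesis
    using assms by simp
qed

lemma Chat_enc_shift: "N \<le> j \<Longrightarrow> j < 2 * N \<Longrightarrow> Chat_enc N a b u j = tridiag_apply N a b u (j - N)"
  unfolding Chat_enc_def tridiag_apply_def
  by (rule sum.cong) (auto simp: genmat_def Tmat_commute mult.commute)

lemma Chat_enc_beyond: "2 * N \<le> j \<Longrightarrow> Chat_enc N a b u j = 0"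
  unfolding Chat_enc_def by (rule sum.neutral) (auto simp: genmat_def)

lemma Chat_enc_add: "Chat_enc N a b (\<lambda>i. u i + w i) = (\<lambda>j. Chat_enc N a b u j + Chat_enc N a b w j)"
  unfolding Chat_enc_def by (auto simp: algebra_simps sum.distrib)

lemma Chat_enc_scale: "Chat_enc N a b (\<lambda>i. c * u i) = (\<lambda>j. c * Chat_enc N a b u j)"
  unfolding Chat_enc_def by (auto simp: algebra_simps sum_distrib_left)

lemma Chat_enc_zero: "Chat_enc N a b (\<lambda>i. 0) = (\<lambda>j. 0)"
  unfolding Chat_enc_def by simp

lemma Chat_enc_cong: "(\<And>i. i < N \<Longrightarrow> u i = w i) \<Longrightarrow> Chat_enc N a b u = Chat_enc N a b w"
  unfolding Chat_enc_def by auto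

lemma dotp_Chat_enc:
  "dotp (2 * N) (Chat_enc N a b u) (Chat_enc N a b w) =
     (\<Sum>k<N. u k * w k) + (\<Sum>k<N. tridiag_apply N a b u k * tridiag_apply N a b w k)"
proof -
  have "dotp (2 * N) (Chat_enc N a b u) (Chat_enc N a b w)
      = (\<Sum>k<N. Chat_enc N a b u k * Chat_enc N a b w k)
        + (\<Sum>k<N. Chat_enc N a b u (N + k) * Chat_enc N a b w (N + k))"
    by (simp add: dotp_def mult_2 sum_lessThan_add)
  then show ?thesis
    by (simp add: Chat_enc_less Chat_enc_shift)
qed

lemma tridiag_apply_row:
  assumes "k < N"
  shows "tridiag_apply N a b u k =
    a * u k + (if 0 < k then b * u (k - 1) else 0) + (if k + 1 < N then b * u (k + 1) else 0)"
proof -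
  have "tridiag_apply N a b u k = (\<Sum>i<N. (if i = k then a * u i else 0)
      + (if i = k + 1 then b * u i else 0) + (if i + 1 = k then b * u i else 0))"
    unfolding tridiag_apply_def by (rule sum.cong) (auto simp: Tmat_def assms)
  also have "\<dots> = a * u k + (if k + 1 < N then b * u (k + 1) else 0)
      + (\<Sum>i<N. if i = k - 1 \<and> 0 < k then b * u i else 0)"
    using assms by (simp add: sum.distrib) (rule sum.cong, auto)
  also have "(\<Sum>i<N. if i = k - 1 \<and> 0 < k then b * u i else 0) = (if 0 < k then b * u (k - 1) else 0)"
    using assms by (cases "0 < k") auto
  finally show ?thesis by (simp add: ac_simps)
qed

lemma tridiag_apply_cong:
  "(\<And>i. i < N \<Longrightarrow> u i = w i) \<Longrightarrow> tridiag_apply N a b u k = tridiag_apply N a b w k"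
  unfolding tridiag_apply_def by auto

lemma tridiag_apply_add:
  "tridiag_apply N a b (\<lambda>i. u i + w i) k = tridiag_apply N a b u k + tridiag_apply N a b w k"
  unfolding tridiag_apply_def by (simp add: algebra_simps sum.distrib)

lemma tridiag_apply_plus_one:
  assumes "k < N"
  shows "tridiag_apply N (a + 1) b u k = tridiag_apply N a b u k + u k"
proof -
  have "tridiag_apply N (a + 1) b u k = (\<Sum>i<N. Tmat N a b k i * u i + (if i = k then u i else 0))"
    unfolding tridiag_apply_def by (rule sum.cong) (auto simp: Tmat_def assms algebra_simps)
  then show ?thesis
    using assms by (simp add: sum.distrib tridiag_apply_def)
qed

lemma tridiag_kernel_eq_continuant:
  fixes a b :: "'K::field"
  assumes char: "CHAR('K) = 2" and b: "b \<noteq> 0"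
    and ker: "\<forall>k<N. tridiag_apply N a b u k = 0"
  shows "k < N \<Longrightarrow> u k = u 0 * continuant (a / b) k"
proof (induction k rule: less_induct)
  case (less k)
  have row: "a * u k + (if 0 < k then b * u (k - 1) else 0) = (if k + 1 < N then b * u (k + 1) else 0)"
    if "k < N" for k
    using ker that tridiag_apply_row[OF that, of a b u] add_eq_0_iff_CHAR_2[OF char] by simp
  consider "k = 0" | "k = 1" | j where "k = Suc (Suc j)"
    by (metis One_nat_def not0_implies_Suc)
  then show ?case
  proof cases
    case 2
    then have "b * u 1 = a * u 0" using row[of 0] less.prems by simp
    then show ?thesis using 2 b by (simp add: field_simps)
  next
    case (3 j)
    have "b * u (Suc (Suc j)) = a * u (Suc j) + b * u j"
      using row[of "Suc j"] less.prems 3 by simp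
    moreover have "u (Suc j) = u 0 * continuant (a / b) (Suc j)" "u j = u 0 * continuant (a / b) j"
      using less.IH[of "Suc j"] less.IH[of j] less.prems 3 by simp_all
    ultimately show ?thesis
      using 3 b by (simp add: field_simps)
  qed simp
qed

lemma tridiag_kernel_trivial:
  fixes a b :: "'K::field"
  assumes char: "CHAR('K) = 2" and b: "b \<noteq> 0" and N: "N \<ge> 2"
    and nonsing: "continuant (a / b) N \<noteq> 0"
    and ker: "\<forall>k<N. tridiag_apply N a b u k = 0"
  shows "\<forall>k<N. u k = 0"
proof -
  note u = tridiag_kernel_eq_continuant[OF char b ker]
  obtain M where M: "N = Suc (Suc M)"
    using N by (metis add_2_eq_Suc le_Suc_ex)
  \<comment> \<open>the last row of the system extends the recurrence to index \<open>N\<close>\<close>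
  have "a * u (Suc M) + b * u M = 0"
    using ker tridiag_apply_row[of "Suc M" N a b u] M by simp
  then have "b * (u 0 * continuant (a / b) N) = 0"
    using u[of M] u[of "Suc M"] M b by (simp add: field_simps)
  then have "u 0 = 0"
    using b nonsing by simp
  then show ?thesis
    using u by simp
qed

lemma Chat_enc_eq_0_if_orthogonal:
  fixes a b :: "'K::field"
  assumes char: "CHAR('K) = 2" and b: "b \<noteq> 0" and N: "N \<ge> 2"
    and nonsing: "continuant ((a + 1) / b) N \<noteq> 0"
    and orth: "\<forall>w. dotp (2 * N) (Chat_enc N a b u) (Chat_enc N a b w) = 0"
  shows "Chat_enc N a b u = (\<lambda>j. 0)"
proof -
  let ?T = "tridiag_apply N a b" and ?T' = "tridiag_apply N (a + 1) b"
  \<comment> \<open>orthogonality to all rows of \<open>[I | T]\<close> says \<open>(I + T\<^sup>2) u = 0\<close>, and \<open>I + T\<^sup>2 = (T + I)\<^sup>2\<close> in characteristic 2\<close>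
  have IT2: "u k + ?T (?T u) k = 0" if k: "k < N" for k
  proof -
    define w where "w = (\<lambda>i. if i = k then (1::'K) else 0)"
    have "?T w l = Tmat N a b l k" for l
      unfolding tridiag_apply_def w_def using k by (simp add: if_distrib cong: if_cong)
    then have "dotp (2 * N) (Chat_enc N a b u) (Chat_enc N a b w) = u k + (\<Sum>l<N. ?T u l * Tmat N a b l k)"
      using k by (simp add: dotp_Chat_enc w_def if_distrib cong: if_cong)
    also have "(\<Sum>l<N. ?T u l * Tmat N a b l k) = ?T (?T u) k"
      unfolding tridiag_apply_def[of N a b "?T u"] by (rule sum.cong) (auto simp: Tmat_commute mult.commute)
    finally show ?thesis
      using orth by simp
  qed
  have "?T' (?T' u) k = 0" if k: "k < N" for k
  proof -
    have "?T' (?T' u) k = ?T (\<lambda>i. ?T u i + u i) k + (?T u k + u k)"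
      using k by (simp add: tridiag_apply_plus_one cong: tridiag_apply_cong)
    also have "\<dots> = (u k + ?T (?T u) k) + (?T u k + ?T u k)"
      by (simp add: tridiag_apply_add algebra_simps)
    finally show ?thesis
      using IT2[OF k] add_self_CHAR_2[OF char] by simp
  qed
  then have "\<forall>k<N. ?T' u k = 0"
    using tridiag_kernel_trivial[OF char b N nonsing] by blast
  then have "\<forall>k<N. u k = 0"
    using tridiag_kernel_trivial[OF char b N nonsing] by blast
  then show ?thesis
    using Chat_enc_cong[of N u "\<lambda>i. 0"] by (simp add: Chat_enc_zero)
qed

lemma zero_mem_Chat: "(\<lambda>_. 0) \<in> Chat N a b"
  using rangeI[of "Chat_enc N a b" "\<lambda>i. 0"] by (simp add: Chat_eq_range_Chat_enc Chat_enc_zero)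

lemma nonzero_mem_Chat:
  assumes "0 < N"
  shows "\<exists>c \<in> Chat N a b. c \<noteq> (\<lambda>_. 0)"
proof
  let ?c = "Chat_enc N a b (\<lambda>i. if i = 0 then 1 else 0)"
  show "?c \<in> Chat N a b"
    by (simp add: Chat_eq_range_Chat_enc)
  have "?c 0 = 1"
    by (subst Chat_enc_less[OF assms]) simp
  then show "?c \<noteq> (\<lambda>_. 0)"
    by (auto dest: fun_cong[of _ _ 0])
qed

lemma lin_code_Chat: "lin_code UNIV (2 * N) (Chat N a b)"
  using zero_mem_Chat[of N a b] unfolding lin_code_def Chat_eq_range_Chat_enc
  by (auto simp: vecs_def smult_vec_def Chat_enc_beyond
      simp flip: Chat_enc_add Chat_enc_scale Chat_enc_zero)

lemma code_dim_Chat: "code_dim UNIV (Chat N a b) N"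
  unfolding code_dim_def
proof (intro exI conjI)
  show "\<forall>i<N. genmat N a b i \<in> Chat N a b"
  proof (intro allI impI)
    fix i assume "i < N"
    have "Chat_enc N a b (\<lambda>i'. if i' = i then 1 else 0) j = genmat N a b i j" for j
      unfolding Chat_enc_def using \<open>i < N\<close> by (simp add: if_distrib[of "\<lambda>x. x * _"] cong: if_cong)
    then have "genmat N a b i = Chat_enc N a b (\<lambda>i'. if i' = i then 1 else 0)"
      by auto
    then show "genmat N a b i \<in> Chat N a b"
      by (simp add: Chat_eq_range_Chat_enc)
  qed
  show "lin_indep_vecs UNIV N (genmat N a b)"
    unfolding lin_indep_vecs_def
  proof (intro allI impI)
    fix c :: "nat \<Rightarrow> 'a" and k
    assume "(\<lambda>j. \<Sum>i<N. c i * genmat N a b i j) = (\<lambda>_. 0)" and "k < N"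
    then have "Chat_enc N a b c k = 0"
      by (simp add: Chat_enc_def fun_eq_iff)
    then show "c k = 0"
      using Chat_enc_less[OF \<open>k < N\<close>, of a b c] by simp
  qed
qed (simp add: Chat_def)

lemma is_LCD_Chat:
  fixes a b :: "'K::field"
  assumes char: "CHAR('K) = 2" and b: "b \<noteq> 0" and N: "N \<ge> 2"
    and nonsing: "continuant ((a + 1) / b) N \<noteq> 0"
  shows "is_LCD UNIV (2 * N) (Chat N a b)"
  unfolding is_LCD_def
proof (intro equalityI subsetI)
  fix v assume "v \<in> Chat N a b \<inter> dual_code UNIV (2 * N) (Chat N a b)"
  then obtain u where u: "v = Chat_enc N a b u" and "\<forall>w. dotp (2 * N) v (Chat_enc N a b w) = 0"
    by (auto simp: dual_code_def Chat_eq_range_Chat_enc)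
  then show "v \<in> {\<lambda>_. 0}"
    using Chat_enc_eq_0_if_orthogonal[OF char b N nonsing] by simp
next
  fix v :: "nat \<Rightarrow> 'K" assume "v \<in> {\<lambda>_. 0}"
  then show "v \<in> Chat N a b \<inter> dual_code UNIV (2 * N) (Chat N a b)"
    using zero_mem_Chat[of N a b] by (auto simp: dual_code_def vecs_def dotp_def)
qed

section \<open>Isometries and the trace form\<close>

lemma Fsub_power_power: "c \<in> Fsub q \<Longrightarrow> c ^ (q ^ i) = c"
  by (induction i) (simp_all add: Fsub_def power_mult)

lemma Fsub_mult: "c \<in> Fsub q \<Longrightarrow> d \<in> Fsub q \<Longrightarrow> c * d \<in> Fsub q"
  by (simp add: Fsub_def power_mult_distrib)

lemma zero_mem_Fsub: "0 < q \<Longrightarrow> 0 \<in> Fsub q"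
  by (simp add: Fsub_def)

lemma trace_sum:
  fixes f :: "'b \<Rightarrow> 'K::field"
  assumes "prime CHAR('K)" and "q = CHAR('K) ^ t"
  shows "trace q s (\<Sum>k\<in>A. f k) = (\<Sum>k\<in>A. trace q s (f k))"
proof -
  have "(\<Sum>k\<in>A. f k) ^ (q ^ i) = (\<Sum>k\<in>A. f k ^ (q ^ i))" for i
    using assms by (intro freshmans_dream_sum'[of "q ^ i" "t * i"]) (simp_all add: power_mult)
  then show ?thesis
    unfolding trace_def by (simp add: sum.swap[of _ "{..<s}"])
qed

lemma trace_scale: "c \<in> Fsub q \<Longrightarrow> trace q s (c * x) = c * trace q s x"
  by (simp add: trace_def power_mult_distrib sum_distrib_left Fsub_power_power)

lemma Fq_linear_map_zero:
  assumes "Fq_linear_map q n \<pi>"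
  shows "\<pi> 0 j = 0"
proof -
  have "\<pi> 0 j + \<pi> 0 j = \<pi> 0 j + 0"
    using assms unfolding Fq_linear_map_def by (metis add.right_neutral)
  then show ?thesis
    by (simp only: add_left_cancel)
qed

lemma Fq_linear_map_add: "Fq_linear_map q n \<pi> \<Longrightarrow> \<pi> (x + y) j = \<pi> x j + \<pi> y j"
  by (simp add: Fq_linear_map_def)

lemma Fq_linear_map_scale: "Fq_linear_map q n \<pi> \<Longrightarrow> c \<in> Fsub q \<Longrightarrow> \<pi> (c * x) j = c * \<pi> x j"
  by (simp add: Fq_linear_map_def smult_vec_def)

lemma Fq_linear_map_lincomb:
  assumes "Fq_linear_map q n \<pi>" and "\<forall>k\<in>A. c k \<in> Fsub q"
  shows "\<pi> (\<Sum>k\<in>A. c k * x k) j = (\<Sum>k\<in>A. c k * \<pi> (x k) j)"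
  using assms(2) by (induction A rule: infinite_finite_induct)
    (simp_all add: Fq_linear_map_zero[OF assms(1)] Fq_linear_map_add[OF assms(1)]
      Fq_linear_map_scale[OF assms(1)])

lemma Fq_linear_map_values:
  assumes "Fq_linear_map q n \<pi>"
  shows "j < n \<Longrightarrow> \<pi> x j \<in> Fsub q" and "n \<le> j \<Longrightarrow> \<pi> x j = 0"
  using assms unfolding Fq_linear_map_def vecs_def by auto

lemma dotp_lincomb:
  "dotp n (\<lambda>j. \<Sum>i\<in>I. c i * f i j) (\<lambda>j. \<Sum>l\<in>L. d l * g l j) =
     (\<Sum>i\<in>I. \<Sum>l\<in>L. c i * d l * dotp n (f i) (g l))"
proof -
  have "dotp n (\<lambda>j. \<Sum>i\<in>I. c i * f i j) (\<lambda>j. \<Sum>l\<in>L. d l * g l j) =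
      (\<Sum>j<n. \<Sum>i\<in>I. \<Sum>l\<in>L. c i * d l * (f i j * g l j))"
    unfolding dotp_def sum_product by (simp add: mult_ac)
  also have "\<dots> = (\<Sum>i\<in>I. \<Sum>l\<in>L. \<Sum>j<n. c i * d l * (f i j * g l j))"
    by (subst sum.swap) (simp add: sum.swap[of _ "{..<n}"])
  finally show ?thesis
    by (simp add: dotp_def sum_distrib_left)
qed

locale Fq_isometry =
  fixes q t s n :: nat and \<pi> :: "'K::field \<Rightarrow> nat \<Rightarrow> 'K"
  assumes prime_CHAR: "prime CHAR('K)" and q_eq: "q = CHAR('K) ^ t"
    and isometry: "is_isometry q s n \<pi>" and s_pos: "0 < s"
begin

lemma Fq_linear: "Fq_linear_map q n \<pi>"
  using isometry by (simp add: is_isometry_def)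

lemma q_pos: "0 < q"
  using prime_CHAR by (simp add: q_eq prime_gt_0_nat)

lemma dual_bases:
  obtains e e' where "is_basis_over (Fsub q) s e" "is_basis_over (Fsub q) s e'"
    "\<forall>i<s. \<forall>j<s. trace q s (e i * e' j) = (if i = j then 1 else 0)"
    "\<forall>i<s. \<forall>j<s. dotp n (\<pi> (e i)) (\<pi> (e' j)) = (if i = j then 1 else 0)"
  using isometry unfolding is_isometry_def by blast

lemma dotp_eq_trace: "dotp n (\<pi> x) (\<pi> y) = trace q s (x * y)"
proof -
  obtain e e' where B: "is_basis_over (Fsub q) s e" "is_basis_over (Fsub q) s e'"
    and tr: "\<forall>i<s. \<forall>j<s. trace q s (e i * e' j) = (if i = j then 1 else 0)"
    and dp: "\<forall>i<s. \<forall>j<s. dotp n (\<pi> (e i)) (\<pi> (e' j)) = (if i = j then 1 else 0)"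
    by (rule dual_bases)
  obtain cx where cx: "\<forall>i<s. cx i \<in> Fsub q" "x = (\<Sum>i<s. cx i * e i)"
    using B(1) unfolding is_basis_over_def by blast
  obtain cy where cy: "\<forall>i<s. cy i \<in> Fsub q" "y = (\<Sum>i<s. cy i * e' i)"
    using B(2) unfolding is_basis_over_def by blast
  have "\<pi> x = (\<lambda>j. \<Sum>i<s. cx i * \<pi> (e i) j)" "\<pi> y = (\<lambda>j. \<Sum>i<s. cy i * \<pi> (e' i) j)"
    using cx cy by (auto simp: Fq_linear_map_lincomb[OF Fq_linear])
  then have "dotp n (\<pi> x) (\<pi> y) = (\<Sum>i<s. \<Sum>l<s. cx i * cy l * dotp n (\<pi> (e i)) (\<pi> (e' l)))"
    by (simp add: dotp_lincomb)
  also have "\<dots> = (\<Sum>i<s. \<Sum>l<s. cx i * cy l * trace q s (e i * e' l))"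
    using tr dp by (intro sum.cong refl) simp
  also have "\<dots> = (\<Sum>i<s. \<Sum>l<s. trace q s ((cx i * cy l) * (e i * e' l)))"
    using cx(1) cy(1) by (intro sum.cong refl) (simp add: trace_scale Fsub_mult)
  also have "\<dots> = trace q s (\<Sum>i<s. \<Sum>l<s. (cx i * cy l) * (e i * e' l))"
    by (simp only: trace_sum[OF prime_CHAR q_eq])
  also have "(\<Sum>i<s. \<Sum>l<s. (cx i * cy l) * (e i * e' l)) = x * y"
    unfolding cx(2) cy(2) sum_product by (simp add: mult_ac)
  finally show ?thesis .
qed

lemma trace_nondegenerate:
  fixes S :: 'K
  assumes "S \<noteq> 0"
  shows "\<exists>l. trace q s (l * S) \<noteq> 0"
proof -
  obtain e e' where "is_basis_over (Fsub q) s e" "is_basis_over (Fsub q) s e'"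
    and tr: "\<forall>i<s. \<forall>j<s. trace q s (e i * e' j) = (if i = j then 1 else 0)"
    and dp: "\<forall>i<s. \<forall>j<s. dotp n (\<pi> (e i)) (\<pi> (e' j)) = (if i = j then 1 else 0)"
    by (rule dual_bases)
  have "trace q s (e 0 * e' 0) = 1"
    using tr s_pos by simp
  moreover have "(e 0 * e' 0 / S) * S = e 0 * e' 0"
    using assms by simp
  ultimately have "trace q s ((e 0 * e' 0 / S) * S) \<noteq> 0"
    by simp
  then show ?thesis ..
qed

lemma eq_0_if_image_eq_0:
  assumes "\<pi> x = (\<lambda>_. 0)"
  shows "x = 0"
proof (rule ccontr)
  assume "x \<noteq> 0"
  then obtain l where "trace q s (l * x) \<noteq> 0"
    using trace_nondegenerate by blast
  moreover have "trace q s (l * x) = dotp n (\<pi> x) (\<pi> l)"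
    by (simp add: dotp_eq_trace mult.commute)
  ultimately show False
    using assms by (simp add: dotp_def)
qed

lemma inj: "inj \<pi>"
proof (rule injI)
  fix x y assume "\<pi> x = \<pi> y"
  then have "\<pi> (x - y) = (\<lambda>_. 0)"
    using Fq_linear_map_add[OF Fq_linear, of "x - y" y] by auto
  then show "x = y"
    using eq_0_if_image_eq_0[of "x - y"] by simp
qed

lemma length_pos: "0 < n"
proof -
  obtain e e' where "is_basis_over (Fsub q) s e" "is_basis_over (Fsub q) s e'"
    and tr: "\<forall>i<s. \<forall>j<s. trace q s (e i * e' j) = (if i = j then 1 else 0)"
    and dp: "\<forall>i<s. \<forall>j<s. dotp n (\<pi> (e i)) (\<pi> (e' j)) = (if i = j then 1 else 0)"
    by (rule dual_bases)
  have "dotp n (\<pi> (e 0)) (\<pi> (e' 0)) \<noteq> 0"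
    using dp s_pos by simp
  then show ?thesis
    by (cases "n = 0") (auto simp: dotp_def)
qed

end

section \<open>Transferring codes along an isometry\<close>

lemma hamming_eq_sum: "hamming n x y = (\<Sum>i<n. if x i \<noteq> y i then 1 else 0)"
proof -
  have "{i. i < n \<and> x i \<noteq> y i} = {i \<in> {..<n}. x i \<noteq> y i}"
    by auto
  then show ?thesis
    unfolding hamming_def using sum.inter_filter[of "{..<n}" "\<lambda>_. 1::nat"] by simp
qed

lemma hamming_le_length: "hamming n x y \<le> n"
  unfolding hamming_def by (rule order.trans[OF card_mono[of "{..<n}"]]) auto

lemma min_dist_le_hamming:
  "x \<in> C \<Longrightarrow> y \<in> C \<Longrightarrow> x \<noteq> y \<Longrightarrow> min_dist n C \<le> hamming n x y"
  unfolding min_dist_def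
  by (rule Min_le) (auto intro: finite_subset[of _ "{..n}"] simp: hamming_le_length)

lemma min_dist_greatest:
  assumes "x0 \<in> C" "y0 \<in> C" "x0 \<noteq> y0"
    and "\<And>x y. x \<in> C \<Longrightarrow> y \<in> C \<Longrightarrow> x \<noteq> y \<Longrightarrow> B \<le> hamming n x y"
  shows "B \<le> min_dist n C"
  unfolding min_dist_def using assms
  by (intro Min.boundedI) (auto intro: finite_subset[of _ "{..n}"] simp: hamming_le_length)

lemma pi_ext_block:
  assumes "j < 2 * N" "l < n"
  shows "pi_ext n N \<pi> c (j * n + l) = \<pi> (c j) l"
proof -
  have "j * n + l < (j + 1) * n"
    using assms by simp
  also have "\<dots> \<le> 2 * N * n"
    using assms by (intro mult_right_mono) auto
  finally show ?thesis
    using assms by (simp add: pi_ext_def)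
qed

lemma sum_pi_ext_blocks:
  "(\<Sum>k<2 * n * N. f (pi_ext n N \<pi> c k) (pi_ext n N \<pi> c' k)) =
     (\<Sum>j<2 * N. \<Sum>l<n. f (\<pi> (c j) l) (\<pi> (c' j) l))"
proof -
  have "(\<Sum>k<2 * n * N. f (pi_ext n N \<pi> c k) (pi_ext n N \<pi> c' k))
      = (\<Sum>j<2 * N. \<Sum>l<n. f (pi_ext n N \<pi> c (j * n + l)) (pi_ext n N \<pi> c' (j * n + l)))"
    using sum_lessThan_mult_blocks[of _ "2 * N" n] by (simp add: ac_simps)
  also have "\<dots> = (\<Sum>j<2 * N. \<Sum>l<n. f (\<pi> (c j) l) (\<pi> (c' j) l))"
    by (intro sum.cong refl) (simp add: pi_ext_block)
  finally show ?thesis .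
qed

lemma dotp_pi_ext:
  "dotp (2 * n * N) (pi_ext n N \<pi> c) (pi_ext n N \<pi> c') = (\<Sum>j<2 * N. dotp n (\<pi> (c j)) (\<pi> (c' j)))"
  unfolding dotp_def by (rule sum_pi_ext_blocks)

lemma hamming_pi_ext:
  "hamming (2 * n * N) (pi_ext n N \<pi> c) (pi_ext n N \<pi> c') =
     (\<Sum>j<2 * N. hamming n (\<pi> (c j)) (\<pi> (c' j)))"
  unfolding hamming_eq_sum by (rule sum_pi_ext_blocks)

lemma hamming_pi_ext_ge:
  assumes "inj \<pi>"
  shows "min_dist n (range \<pi>) * hamming (2 * N) c c' \<le> hamming (2 * n * N) (pi_ext n N \<pi> c) (pi_ext n N \<pi> c')"
proof -
  have "min_dist n (range \<pi>) * hamming (2 * N) c c'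
      = (\<Sum>j<2 * N. if c j \<noteq> c' j then min_dist n (range \<pi>) else 0)"
    unfolding hamming_eq_sum sum_distrib_left by (intro sum.cong) auto
  also have "\<dots> \<le> (\<Sum>j<2 * N. hamming n (\<pi> (c j)) (\<pi> (c' j)))"
    using assms by (intro sum_mono) (auto intro: min_dist_le_hamming dest: injD)
  finally show ?thesis
    by (simp add: hamming_pi_ext)
qed

text \<open>The \<open>\<bbbF>\<^sub>q\<close>-basis \<open>\<pi>(e\<^sub>l v\<^sub>i)\<close> of the image of a code with basis \<open>v\<close>, indexed by \<open>m = i s + l\<close>.\<close>

definition block_basis ::
    "nat \<Rightarrow> nat \<Rightarrow> ('K::field \<Rightarrow> nat \<Rightarrow> 'K) \<Rightarrow> nat \<Rightarrow> (nat \<Rightarrow> 'K) \<Rightarrow> (nat \<Rightarrow> nat \<Rightarrow> 'K) \<Rightarrow> nat \<Rightarrow> nat \<Rightarrow> 'K" where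
  "block_basis n N \<pi> s e v m = pi_ext n N \<pi> (smult_vec (e (m mod s)) (v (m div s)))"

lemma smult_vec_eq_lincomb:
  fixes d k :: nat and E :: "'K::field"
  assumes "d < k"
  shows "smult_vec E (v d) = (\<lambda>j. \<Sum>i<k. (if i = d then E else 0) * v i j)"
proof
  fix j
  have "(\<Sum>i<k. (if i = d then E else 0) * v i j) = (\<Sum>i<k. if i = d then E * v i j else 0)"
    by (rule sum.cong) simp_all
  also have "\<dots> = E * v d j"
    using assms by simp
  finally show "smult_vec E (v d) j = (\<Sum>i<k. (if i = d then E else 0) * v i j)"
    by (simp add: smult_vec_def)
qed

lemma block_index_less:
  fixes m s k l :: nat
  assumes "m < s * k" "l < s"
  shows "m div s * s + l < s * k"
proof -
  have "m div s < k"
    using assms(1) by (simp add: less_mult_imp_div_less mult.commute)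
  have "m div s * s + l < (m div s + 1) * s"
    using assms(2) by simp
  also have "\<dots> \<le> k * s"
    using \<open>m div s < k\<close> by (intro mult_right_mono) simp_all
  finally show ?thesis
    by (simp add: mult.commute)
qed

context Fq_isometry
begin

lemma pi_ext_zero: "pi_ext n N \<pi> (\<lambda>_. 0) = (\<lambda>_. 0)"
  by (simp add: pi_ext_def fun_eq_iff Fq_linear_map_zero[OF Fq_linear])

lemma pi_ext_add: "pi_ext n N \<pi> (\<lambda>j. c j + c' j) = (\<lambda>i. pi_ext n N \<pi> c i + pi_ext n N \<pi> c' i)"
  by (auto simp: pi_ext_def Fq_linear_map_add[OF Fq_linear])

lemma pi_ext_scale: "\<alpha> \<in> Fsub q \<Longrightarrow> pi_ext n N \<pi> (smult_vec \<alpha> c) = smult_vec \<alpha> (pi_ext n N \<pi> c)"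
  by (auto simp: pi_ext_def smult_vec_def Fq_linear_map_scale[OF Fq_linear])

lemma pi_ext_lincomb:
  assumes "\<forall>k\<in>A. \<alpha> k \<in> Fsub q"
  shows "pi_ext n N \<pi> (\<lambda>j. \<Sum>k\<in>A. \<alpha> k * v k j) = (\<lambda>i. \<Sum>k\<in>A. \<alpha> k * pi_ext n N \<pi> (v k) i)"
  using Fq_linear_map_lincomb[OF Fq_linear assms] by (auto simp: pi_ext_def)

lemma pi_ext_mem_vecs: "pi_ext n N \<pi> c \<in> vecs (Fsub q) (2 * n * N)"
  using Fq_linear_map_values(1)[OF Fq_linear] length_pos zero_mem_Fsub[OF q_pos]
  by (auto simp: vecs_def pi_ext_def ac_simps)

lemma pi_ext_eq_0_imp:
  assumes "pi_ext n N \<pi> c = (\<lambda>_. 0)" and "j < 2 * N"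
  shows "c j = 0"
proof -
  have "\<pi> (c j) l = 0" for l
    using pi_ext_block[OF \<open>j < 2 * N\<close>, of l n \<pi> c] assms(1) Fq_linear_map_values(2)[OF Fq_linear]
    by (cases "l < n") auto
  then show ?thesis
    by (intro eq_0_if_image_eq_0) auto
qed

lemma dotp_pi_ext_eq_trace:
  "dotp (2 * n * N) (pi_ext n N \<pi> c) (pi_ext n N \<pi> c') = trace q s (dotp (2 * N) c c')"
proof -
  have "dotp (2 * n * N) (pi_ext n N \<pi> c) (pi_ext n N \<pi> c') = (\<Sum>j<2 * N. trace q s (c j * c' j))"
    by (simp add: dotp_pi_ext dotp_eq_trace)
  then show ?thesis
    by (simp add: dotp_def trace_sum[OF prime_CHAR q_eq])
qed

lemma zero_mem_pi_ext_image:
  assumes "lin_code UNIV (2 * N) C"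
  shows "(\<lambda>_. 0) \<in> pi_ext n N \<pi> ` C"
proof -
  have "pi_ext n N \<pi> (\<lambda>_. 0) \<in> pi_ext n N \<pi> ` C"
    using assms by (simp add: lin_code_def)
  then show ?thesis
    by (simp add: pi_ext_zero)
qed

lemma lin_code_pi_ext:
  assumes "lin_code UNIV (2 * N) C"
  shows "lin_code (Fsub q) (2 * n * N) (pi_ext n N \<pi> ` C)"
  unfolding lin_code_def
proof (intro conjI ballI)
  show "pi_ext n N \<pi> ` C \<subseteq> vecs (Fsub q) (2 * n * N)"
    using pi_ext_mem_vecs by blast
  show "(\<lambda>_. 0) \<in> pi_ext n N \<pi> ` C"
    using assms by (rule zero_mem_pi_ext_image)
next
  fix x y assume "x \<in> pi_ext n N \<pi> ` C" "y \<in> pi_ext n N \<pi> ` C"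
  then obtain c c' where "c \<in> C" "c' \<in> C" and xy: "x = pi_ext n N \<pi> c" "y = pi_ext n N \<pi> c'"
    by blast
  then have "pi_ext n N \<pi> (\<lambda>j. c j + c' j) \<in> pi_ext n N \<pi> ` C"
    using assms by (simp add: lin_code_def)
  then show "(\<lambda>j. x j + y j) \<in> pi_ext n N \<pi> ` C"
    unfolding xy by (simp add: pi_ext_add)
next
  fix \<alpha> :: 'K and x assume "\<alpha> \<in> Fsub q" "x \<in> pi_ext n N \<pi> ` C"
  then obtain c where "c \<in> C" and x: "x = pi_ext n N \<pi> c"
    by blast
  then have "pi_ext n N \<pi> (smult_vec \<alpha> c) \<in> pi_ext n N \<pi> ` C"
    using assms by (simp add: lin_code_def)
  then show "smult_vec \<alpha> x \<in> pi_ext n N \<pi> ` C"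
    unfolding x using pi_ext_scale[OF \<open>\<alpha> \<in> Fsub q\<close>] by simp
qed

lemma is_LCD_pi_ext:
  assumes lin: "lin_code UNIV (2 * N) C" and LCD: "is_LCD UNIV (2 * N) C"
  shows "is_LCD (Fsub q) (2 * n * N) (pi_ext n N \<pi> ` C)"
  unfolding is_LCD_def
proof (intro equalityI subsetI)
  fix v assume v: "v \<in> pi_ext n N \<pi> ` C \<inter> dual_code (Fsub q) (2 * n * N) (pi_ext n N \<pi> ` C)"
  then obtain c where c: "c \<in> C" "v = pi_ext n N \<pi> c"
    by blast
  \<comment> \<open>orthogonality survives \<open>\<pi>\<close> only up to the trace, but \<open>C\<close> is closed under \<open>\<bbbF>\<^bsub>q^s\<^esub>\<close>-scaling
    and the trace form is nondegenerate\<close>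
  have "dotp (2 * N) c c' = 0" if "c' \<in> C" for c'
  proof (rule ccontr)
    assume "dotp (2 * N) c c' \<noteq> 0"
    then obtain l where l: "trace q s (l * dotp (2 * N) c c') \<noteq> 0"
      using trace_nondegenerate by blast
    have "smult_vec l c' \<in> C"
      using lin \<open>c' \<in> C\<close> by (simp add: lin_code_def)
    then have "dotp (2 * n * N) v (pi_ext n N \<pi> (smult_vec l c')) = 0"
      using v by (auto simp: dual_code_def)
    moreover have "dotp (2 * N) c (smult_vec l c') = l * dotp (2 * N) c c'"
      by (simp add: dotp_def smult_vec_def sum_distrib_left mult_ac)
    ultimately show False
      using l c(2) by (simp add: dotp_pi_ext_eq_trace)
  qed
  moreover have "c \<in> vecs UNIV (2 * N)"
    using lin c(1) by (auto simp: lin_code_def)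
  ultimately have "c \<in> C \<inter> dual_code UNIV (2 * N) C"
    using c(1) by (simp add: dual_code_def)
  then have "c = (\<lambda>_. 0)"
    using LCD unfolding is_LCD_def by blast
  then show "v \<in> {\<lambda>_. 0}"
    using c(2) by (simp add: pi_ext_zero)
next
  fix v :: "nat \<Rightarrow> 'K" assume "v \<in> {\<lambda>_. 0}"
  moreover have "(\<lambda>_. 0) \<in> pi_ext n N \<pi> ` C"
    using lin by (rule zero_mem_pi_ext_image)
  ultimately show "v \<in> pi_ext n N \<pi> ` C \<inter> dual_code (Fsub q) (2 * n * N) (pi_ext n N \<pi> ` C)"
    using zero_mem_Fsub[OF q_pos] by (auto simp: dual_code_def vecs_def dotp_def)
qed

lemma min_dist_pi_ext:
  assumes lin: "lin_code UNIV (2 * N) C" and c0: "c0 \<in> C" "c0 \<noteq> (\<lambda>_. 0)"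
  shows "min_dist n (range \<pi>) * min_dist (2 * N) C \<le> min_dist (2 * n * N) (pi_ext n N \<pi> ` C)"
proof (rule min_dist_greatest)
  have "(\<lambda>_. 0) \<in> C" "c0 \<in> vecs UNIV (2 * N)"
    using lin c0(1) by (auto simp: lin_code_def)
  moreover obtain j where "c0 j \<noteq> 0"
    using c0(2) by auto
  ultimately have "j < 2 * N" "c0 j \<noteq> 0"
    by (auto simp: vecs_def not_le[symmetric])
  then show "pi_ext n N \<pi> c0 \<noteq> pi_ext n N \<pi> (\<lambda>_. 0)"
    using pi_ext_eq_0_imp by (auto simp: pi_ext_zero)
  show "pi_ext n N \<pi> c0 \<in> pi_ext n N \<pi> ` C" "pi_ext n N \<pi> (\<lambda>_. 0) \<in> pi_ext n N \<pi> ` C"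
    using c0(1) \<open>(\<lambda>_. 0) \<in> C\<close> by simp_all
next
  fix x y assume "x \<in> pi_ext n N \<pi> ` C" "y \<in> pi_ext n N \<pi> ` C" "x \<noteq> y"
  then obtain c c' where cc': "c \<in> C" "c' \<in> C" "c \<noteq> c'" "x = pi_ext n N \<pi> c" "y = pi_ext n N \<pi> c'"
    by blast
  then have "min_dist n (range \<pi>) * min_dist (2 * N) C \<le> min_dist n (range \<pi>) * hamming (2 * N) c c'"
    by (simp add: min_dist_le_hamming)
  also have "\<dots> \<le> hamming (2 * n * N) x y"
    using hamming_pi_ext_ge[OF inj] cc' by simp
  finally show "min_dist n (range \<pi>) * min_dist (2 * N) C \<le> hamming (2 * n * N) x y" .
qed

lemma lincomb_block_basis:
  assumes "\<forall>m<s * k. \<alpha> m \<in> Fsub q"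
  shows "(\<lambda>j. \<Sum>m<s * k. \<alpha> m * block_basis n N \<pi> s e v m j)
       = pi_ext n N \<pi> (\<lambda>j. \<Sum>i<k. (\<Sum>l<s. \<alpha> (i * s + l) * e l) * v i j)"
proof -
  have blocks: "(\<Sum>m<s * k. \<alpha> m * smult_vec (e (m mod s)) (v (m div s)) j)
      = (\<Sum>i<k. (\<Sum>l<s. \<alpha> (i * s + l) * e l) * v i j)" for j
  proof -
    have "(\<Sum>m<s * k. \<alpha> m * smult_vec (e (m mod s)) (v (m div s)) j)
        = (\<Sum>i<k. \<Sum>l<s. \<alpha> (i * s + l) * smult_vec (e ((i * s + l) mod s)) (v ((i * s + l) div s)) j)"
      by (simp add: mult.commute[of s] sum_lessThan_mult_blocks)
    also have "\<dots> = (\<Sum>i<k. \<Sum>l<s. \<alpha> (i * s + l) * e l * v i j)"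
      by (intro sum.cong refl) (simp add: smult_vec_def)
    finally show ?thesis
      by (simp add: sum_distrib_right)
  qed
  show ?thesis
    using assms by (simp add: block_basis_def pi_ext_lincomb flip: blocks)
qed

lemma lin_indep_block_basis:
  assumes e: "is_basis_over (Fsub q) s e"
    and v: "\<forall>i<k. v i \<in> vecs UNIV (2 * N)" "lin_indep_vecs UNIV k v"
  shows "lin_indep_vecs (Fsub q) (s * k) (block_basis n N \<pi> s e v)"
  unfolding lin_indep_vecs_def
proof (intro allI impI)
  fix \<alpha> m
  assume \<alpha>: "\<forall>m<s * k. \<alpha> m \<in> Fsub q"
    and zero: "(\<lambda>j. \<Sum>m<s * k. \<alpha> m * block_basis n N \<pi> s e v m j) = (\<lambda>_. 0)"
    and m: "m < s * k"
  define w where "w i = (\<Sum>l<s. \<alpha> (i * s + l) * e l)" for i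
  have image_zero: "pi_ext n N \<pi> (\<lambda>j. \<Sum>i<k. w i * v i j) = (\<lambda>_. 0)"
    using zero unfolding lincomb_block_basis[OF \<alpha>] w_def .
  have "(\<Sum>i<k. w i * v i j) = 0" for j
  proof (cases "j < 2 * N")
    case True
    then show ?thesis
      using pi_ext_eq_0_imp[OF image_zero] by simp
  next
    case False
    then show ?thesis
      using v(1) by (auto simp: vecs_def intro!: sum.neutral)
  qed
  then have "\<forall>i<k. w i = 0"
    using v(2) unfolding lin_indep_vecs_def by blast
  moreover have "m div s < k"
    using m by (simp add: less_mult_imp_div_less mult.commute)
  ultimately have "(\<Sum>l<s. \<alpha> (m div s * s + l) * e l) = 0"
    unfolding w_def by blast
  moreover have "\<forall>l<s. \<alpha> (m div s * s + l) \<in> Fsub q"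
    using \<alpha> block_index_less[OF m] by simp
  ultimately have "\<forall>l<s. \<alpha> (m div s * s + l) = 0"
    using e[unfolded is_basis_over_def, THEN conjunct1, rule_format, of "\<lambda>l. \<alpha> (m div s * s + l)"]
    by blast
  moreover have "m mod s < s"
    using s_pos by simp
  ultimately have "\<alpha> (m div s * s + m mod s) = 0"
    by blast
  then show "\<alpha> m = 0"
    by simp
qed

lemma span_block_basis:
  assumes e: "is_basis_over (Fsub q) s e"
  shows "pi_ext n N \<pi> ` {(\<lambda>j. \<Sum>i<k. c i * v i j) | c. \<forall>i<k. c i \<in> UNIV}
       = {(\<lambda>j. \<Sum>m<s * k. \<alpha> m * block_basis n N \<pi> s e v m j) | \<alpha>. \<forall>m<s * k. \<alpha> m \<in> Fsub q}"
proof (intro equalityI subsetI)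
  fix x assume "x \<in> pi_ext n N \<pi> ` {(\<lambda>j. \<Sum>i<k. c i * v i j) | c. \<forall>i<k. c i \<in> UNIV}"
  then obtain w where x: "x = pi_ext n N \<pi> (\<lambda>j. \<Sum>i<k. w i * v i j)"
    by blast
  have "\<forall>i. \<exists>\<gamma>. (\<forall>l<s. \<gamma> l \<in> Fsub q) \<and> w i = (\<Sum>l<s. \<gamma> l * e l)"
    using e unfolding is_basis_over_def by blast
  then obtain \<beta> where \<beta>: "\<forall>l<s. \<beta> i l \<in> Fsub q" "w i = (\<Sum>l<s. \<beta> i l * e l)" for i
    by (auto dest!: choice)
  define \<alpha> where "\<alpha> m = \<beta> (m div s) (m mod s)" for m
  have \<alpha>: "\<forall>m<s * k. \<alpha> m \<in> Fsub q"
    using \<beta>(1) s_pos by (simp add: \<alpha>_def)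
  have "(\<Sum>l<s. \<alpha> (i * s + l) * e l) = w i" for i
    unfolding \<beta>(2)[of i] \<alpha>_def by (intro sum.cong refl) simp
  then have "x = (\<lambda>j. \<Sum>m<s * k. \<alpha> m * block_basis n N \<pi> s e v m j)"
    using lincomb_block_basis[OF \<alpha>] x by simp
  with \<alpha> show "x \<in> {(\<lambda>j. \<Sum>m<s * k. \<alpha> m * block_basis n N \<pi> s e v m j) | \<alpha>. \<forall>m<s * k. \<alpha> m \<in> Fsub q}"
    by (intro CollectI exI[of _ \<alpha>]) simp
next
  fix x assume "x \<in> {(\<lambda>j. \<Sum>m<s * k. \<alpha> m * block_basis n N \<pi> s e v m j) | \<alpha>. \<forall>m<s * k. \<alpha> m \<in> Fsub q}"
  then obtain \<alpha> where "\<forall>m<s * k. \<alpha> m \<in> Fsub q" "x = (\<lambda>j. \<Sum>m<s * k. \<alpha> m * block_basis n N \<pi> s e v m j)"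
    by blast
  then have "x = pi_ext n N \<pi> (\<lambda>j. \<Sum>i<k. (\<Sum>l<s. \<alpha> (i * s + l) * e l) * v i j)"
    by (simp add: lincomb_block_basis)
  then show "x \<in> pi_ext n N \<pi> ` {(\<lambda>j. \<Sum>i<k. c i * v i j) | c. \<forall>i<k. c i \<in> UNIV}"
    by (auto intro!: exI[of _ "\<lambda>i. \<Sum>l<s. \<alpha> (i * s + l) * e l"])
qed

lemma code_dim_pi_ext:
  assumes C: "C \<subseteq> vecs UNIV (2 * N)" and dim: "code_dim UNIV C k"
  shows "code_dim (Fsub q) (pi_ext n N \<pi> ` C) (s * k)"
proof -
  obtain v where v: "\<forall>i<k. v i \<in> C" "lin_indep_vecs UNIV k v"
    and C_eq: "C = {(\<lambda>j. \<Sum>i<k. c i * v i j) | c. \<forall>i<k. c i \<in> UNIV}"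
    using dim unfolding code_dim_def by (elim exE conjE)
  obtain e :: "nat \<Rightarrow> 'K" where e: "is_basis_over (Fsub q) s e"
    using isometry unfolding is_isometry_def by blast
  have mem: "\<forall>m<s * k. block_basis n N \<pi> s e v m \<in> pi_ext n N \<pi> ` C"
  proof (intro allI impI)
    fix m assume "m < s * k"
    then have "m div s < k"
      by (simp add: less_mult_imp_div_less mult.commute)
    then have "smult_vec (e (m mod s)) (v (m div s)) \<in> C"
      unfolding C_eq smult_vec_eq_lincomb[OF \<open>m div s < k\<close>]
      by (intro CollectI exI[of _ "\<lambda>i. if i = m div s then e (m mod s) else 0"]) simp
    then show "block_basis n N \<pi> s e v m \<in> pi_ext n N \<pi> ` C"
      by (simp add: block_basis_def)
  qed
  have "\<forall>i<k. v i \<in> vecs UNIV (2 * N)"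
    using v(1) C by blast
  then have indep: "lin_indep_vecs (Fsub q) (s * k) (block_basis n N \<pi> s e v)"
    using lin_indep_block_basis[OF e] v(2) by blast
  have span: "pi_ext n N \<pi> ` C
      = {(\<lambda>j. \<Sum>m<s * k. \<alpha> m * block_basis n N \<pi> s e v m j) | \<alpha>. \<forall>m<s * k. \<alpha> m \<in> Fsub q}"
    unfolding C_eq by (rule span_block_basis[OF e])
  show ?thesis
    unfolding code_dim_def by (intro exI[of _ "block_basis n N \<pi> s e v"] conjI mem indep span)
qed

end

theorem theorem3p2:
  fixes q s n N r m t :: nat
    and \<pi> :: "'K::{field,finite} \<Rightarrow> nat \<Rightarrow> 'K"
    and a b :: 'K
    and \<theta> :: "'K alg_closure"
  assumes q_pow2: "t \<ge> 1" "q = 2 ^ t"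
    and card_K: "card (UNIV :: 'K set) = q ^ s"
    and s_ge: "s \<ge> 2" and n_ge: "n \<ge> s"
    and dmax: "d_max_iso q s n TYPE('K) \<ge> 1"
    and iso: "is_isometry q s n \<pi>"
    and d_opt: "min_dist n (range \<pi>) = d_max_iso q s n TYPE('K)"
    and b_nz: "b \<noteq> 0"
    and N_ge: "N \<ge> 2"
    and r_exact: "2 ^ r dvd N + 1" "\<not> 2 ^ (r + 1) dvd N + 1"
    and m_def: "N + 1 = 2 ^ r * (m + 1)"
    and theta_prim: "\<theta> ^ (m + 1) = 1" "\<forall>k. 0 < k \<and> k < m + 1 \<longrightarrow> \<theta> ^ k \<noteq> 1"
    and cond0: "r = 0 \<Longrightarrow> to_ac (a / b) \<notin>
        {to_ac (1 / b) + \<theta> ^ i + inverse (\<theta> ^ i) | i. 1 \<le> i \<and> 2 * i \<le> m}"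
    and cond1: "r \<ge> 1 \<Longrightarrow> m = 0 \<Longrightarrow> a \<noteq> 1"
    and cond2: "r \<ge> 1 \<Longrightarrow> m \<ge> 1 \<Longrightarrow> to_ac (a / b) \<notin>
        {to_ac (1 / b)} \<union> {to_ac (1 / b) + \<theta> ^ i + inverse (\<theta> ^ i) | i. 1 \<le> i \<and> 2 * i \<le> m}"
  shows "lin_code (Fsub q) (2 * n * N) (pi_ext n N \<pi> ` Chat N a b)
       \<and> code_dim (Fsub q) (pi_ext n N \<pi> ` Chat N a b) (s * N)
       \<and> is_LCD (Fsub q) (2 * n * N) (pi_ext n N \<pi> ` Chat N a b)
       \<and> min_dist (2 * n * N) (pi_ext n N \<pi> ` Chat N a b)
           \<ge> min_dist n (range \<pi>) * min_dist (2 * N) (Chat N a b)"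
proof -
  have char: "CHAR('K) = 2"
    using CHAR_eq_2_if_card_power_2[of "t * s"] card_K q_pow2(2) by (simp add: power_mult)
  interpret Fq_isometry q t s n \<pi>
    using char iso s_ge q_pow2(2) by unfold_locales simp_all
  have nonsing: "continuant ((a + 1) / b) N \<noteq> 0"
    using continuant_plus_one_div_nonzero[OF char b_nz r_exact(2) m_def theta_prim cond0 cond1 cond2] .
  have lin: "lin_code UNIV (2 * N) (Chat N a b)"
    by (rule lin_code_Chat)
  then have vecs: "Chat N a b \<subseteq> vecs UNIV (2 * N)"
    by (simp add: lin_code_def)
  obtain c0 where c0: "c0 \<in> Chat N a b" "c0 \<noteq> (\<lambda>_. 0)"
    using nonzero_mem_Chat[of N a b] N_ge by auto
  show ?thesis
    by (intro conjI lin_code_pi_ext[OF lin] code_dim_pi_ext[OF vecs code_dim_Chat]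
        is_LCD_pi_ext[OF lin is_LCD_Chat[OF char b_nz N_ge nonsing]] min_dist_pi_ext[OF lin c0])
qed

end
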